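(* The ind-scheme $\mathcal M^\infty=\bigcup_N\mathcal M^N$ is Zariski-dense in $L^-\mathrm{GL}_K$; i.e., a function in $\mathbb C[L^-\mathrm{GL}_K]$ vanishing on $\mathcal M^N$ for every $N$ is zero.
   Context: $\mathcal M(N,K)=\mathrm{Rep}(N,K)/\!/\mathrm{GL}_N$, $\mathrm{Rep}(N,K)$ being triples $(B,\psi,\overline\psi)$ with $B\in\mathrm{Mat}_{N\times N}(\mathbb C)$, $\psi\in\mathrm{Mat}_{N\times K}$, $\overline\psi\in\mathrm{Mat}_{K\times N}$, and $g\cdot(B,\psi,\overline\psi)=(gBg^{-1},g\psi,\overline\psi g^{-1})$. $L^-\mathrm{GL}_K$ is the group scheme of power series $1+\sum_{i\ge1}g_iz^{-i}$, $g_i\in\mathfrak{gl}_K$, with coordinate ring $\mathbb C[T^{(n)}_{ab}:n\ge0,1\le a,b\le K]$, $T^{(n)}_{ab}$ being the $(a,b)$ entry of $g_{n+1}$. Let $\pi_N:\mathcal M(N,K)\to L^-\mathrm{GL}_K$, $(B,\psi,\overline\psi)\mapsto1+\overline\psi(z-\widetilde B/2)^{-1}\psi=1+\sum_{i\ge1}2^{1-i}\overline\psi\widetilde B^{i-1}\psi z^{-i}$, where $\widetilde B=B+\psi\overline\psi$. $\mathcal M^N\subset L^-\mathrm{GL}_K$ is the scheme-theoretic image of $\pi_N$; $\mathcal M^N\subset\mathcal M^{N'}$ for $N<N'$. *)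

theory Defs
  imports Complex_Main "HOL-Library.Poly_Mapping" "Jordan_Normal_Form.Matrix"
begin

text \<open>Coordinates of the loop group L^- GL_K: the variable (n,a,b) stands for
  T^(n)_(a,b), the (a,b) entry of g_(n+1); matrix indices are 0-based, a,b < K.\<close>
type_synonym loopvar = "nat \<times> nat \<times> nat"

type_synonym loop_poly = "(loopvar \<Rightarrow>\<^sub>0 nat) \<Rightarrow>\<^sub>0 complex"

definition peval :: "loop_poly \<Rightarrow> (loopvar \<Rightarrow> complex) \<Rightarrow> complex" where
  "peval p x = (\<Sum>m\<in>Poly_Mapping.keys p. Poly_Mapping.lookup p m * (\<Prod>v\<in>Poly_Mapping.keys m. x v ^ Poly_Mapping.lookup m v))"

definition in_coord_ring :: "nat \<Rightarrow> loop_poly \<Rightarrow> bool" where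
  "in_coord_ring K p \<longleftrightarrow> (\<forall>m\<in>Poly_Mapping.keys p. \<forall>v\<in>Poly_Mapping.keys m. fst (snd v) < K \<and> snd (snd v) < K)"

text \<open>pi_N(B,psi,psibar) = 1 + sum_i 2^(1-i) psibar Bt^(i-1) psi z^-i, Bt = B + psi psibar;
  so T^(n)_(a,b) = 2^(-n) (psibar Bt^n psi)_(a,b).\<close>
definition pi_coord :: "complex mat \<Rightarrow> complex mat \<Rightarrow> complex mat \<Rightarrow> loopvar \<Rightarrow> complex" where
  "pi_coord B psi psibar v = (case v of (n, a, b) \<Rightarrow>
      (1/2) ^ n * (psibar * ((B + psi * psibar) ^\<^sub>m n) * psi) $$ (a, b))"

end

theory Submission
  imports Defs "HOL-Computational_Algebra.Polynomial"
begin

text \<open>Arbitrary prescribed values X_0, ..., X_M of the K x K matrices T^(0), ..., T^(M) are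
  attained by a single point of M(N,K) with N = (M+1)K: take B + psi psibar to be the nilpotent
  shift by K on C^N = (C^K)^(M+1), psi the inclusion of the first block C^K, and let the n-th
  block of columns of psibar be 2^n X_n. Then psibar (B + psi psibar)^n psi = 2^n X_n. Hence a
  polynomial vanishing on every M^N vanishes at every point of affine space, and over an
  infinite field this forces all its coefficients to be zero.\<close>

lemma power_sum_vanishing_imp_coeffs_zero:
  fixes a :: "nat \<Rightarrow> 'a::{idom,ring_char_0}"
  assumes "finite I" and "\<And>y. (\<Sum>k\<in>I. a k * y ^ k) = 0" and "k \<in> I"
  shows "a k = 0"
proof -
  define q where "q = (\<Sum>j\<in>I. monom (a j) j)"
  have "poly q y = 0" for y
    unfolding q_def poly_sum poly_monom by (rule assms(2))
  then have "q = 0"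
    using poly_all_0_iff_0 by blast
  moreover have "coeff q k = a k"
    unfolding q_def coeff_sum coeff_monom using assms(1,3) by (simp add: sum.delta)
  ultimately show ?thesis
    by simp
qed

lemma monomial_sum_vanishing_imp_coeffs_zero:
  fixes e :: "'m \<Rightarrow> 'v \<Rightarrow> nat" and c :: "'m \<Rightarrow> 'a::{idom,ring_char_0}"
  assumes "finite V" and "finite S"
    and "\<And>m m'. m \<in> S \<Longrightarrow> m' \<in> S \<Longrightarrow> (\<forall>v\<in>V. e m v = e m' v) \<Longrightarrow> m = m'"
    and "\<And>x. (\<Sum>m\<in>S. c m * (\<Prod>v\<in>V. x v ^ e m v)) = 0"
    and "m \<in> S"
  shows "c m = 0"
  using assms
proof (induction V arbitrary: S m rule: finite_induct)
  case empty
  then have "S = {m}"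
    by blast
  then show ?case
    using empty.prems(3)[of undefined] by simp
next
  case (insert w V)
  let ?S = "\<lambda>k. {m'\<in>S. e m' w = k}"
  let ?coeff = "\<lambda>x k. \<Sum>m'\<in>?S k. c m' * (\<Prod>v\<in>V. x v ^ e m' v)"
  \<comment> \<open>Viewed as a polynomial in x w, the sum has coefficients ?coeff x k.\<close>
  have slice: "?coeff x (e m w) = 0" for x
  proof (rule power_sum_vanishing_imp_coeffs_zero[where I = "(\<lambda>m'. e m' w) ` S"])
    fix y
    have "(\<Sum>k\<in>(\<lambda>m'. e m' w) ` S. ?coeff x k * y ^ k)
        = (\<Sum>k\<in>(\<lambda>m'. e m' w) ` S. \<Sum>m'\<in>?S k. c m' * (\<Prod>v\<in>V. x v ^ e m' v) * y ^ e m' w)"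
      by (intro sum.cong refl) (simp add: sum_distrib_right)
    also have "\<dots> = (\<Sum>m'\<in>S. c m' * (\<Prod>v\<in>V. x v ^ e m' v) * y ^ e m' w)"
      by (rule sum.image_gen[symmetric, OF insert.prems(1)])
    also have "\<dots> = (\<Sum>m'\<in>S. c m' * (\<Prod>v\<in>insert w V. (x(w := y)) v ^ e m' v))"
    proof (intro sum.cong refl)
      fix m'
      have "(\<Prod>v\<in>V. (x(w := y)) v ^ e m' v) = (\<Prod>v\<in>V. x v ^ e m' v)"
        using \<open>w \<notin> V\<close> by (intro prod.cong) auto
      then show "c m' * (\<Prod>v\<in>V. x v ^ e m' v) * y ^ e m' w
          = c m' * (\<Prod>v\<in>insert w V. (x(w := y)) v ^ e m' v)"
        using insert.hyps by (simp add: mult_ac)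
    qed
    also have "\<dots> = 0"
      by (rule insert.prems(3))
    finally show "(\<Sum>k\<in>(\<lambda>m'. e m' w) ` S. ?coeff x k * y ^ k) = 0" .
  qed (use insert.prems in auto)
  show ?case
  proof (rule insert.IH[of "?S (e m w)"])
    show "m' = m''" if "m' \<in> ?S (e m w)" "m'' \<in> ?S (e m w)" "\<forall>v\<in>V. e m' v = e m'' v" for m' m''
      using that insert.prems(2) by auto
  qed (use insert.prems slice in auto)
qed

definition vars :: "loop_poly \<Rightarrow> loopvar set" where
  "vars p = (\<Union>m\<in>Poly_Mapping.keys p. Poly_Mapping.keys m)"

lemma finite_vars: "finite (vars p)"
  by (simp add: vars_def)

lemma peval_cong:
  assumes "\<And>v. v \<in> vars p \<Longrightarrow> x v = y v"
  shows "peval p x = peval p y"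
  unfolding peval_def
  by (intro sum.cong refl arg_cong2[where f = "(*)"] prod.cong, subst assms) (auto simp: vars_def)

lemma peval_eq_sum_over_vars:
  "peval p x = (\<Sum>m\<in>Poly_Mapping.keys p.
     Poly_Mapping.lookup p m * (\<Prod>v\<in>vars p. x v ^ Poly_Mapping.lookup m v))"
  unfolding peval_def
proof (intro sum.cong refl arg_cong2[where f = "(*)"])
  fix m assume "m \<in> Poly_Mapping.keys p"
  then show "(\<Prod>v\<in>Poly_Mapping.keys m. x v ^ Poly_Mapping.lookup m v)
      = (\<Prod>v\<in>vars p. x v ^ Poly_Mapping.lookup m v)"
    by (intro prod.mono_neutral_left finite_vars) (auto simp: vars_def in_keys_iff)
qed

lemma peval_vanishing_imp_zero:
  assumes "\<And>x. peval p x = 0"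
  shows "p = 0"
proof (rule poly_mapping_eqI)
  fix m
  have distinct: "m' = m''" if "m' \<in> Poly_Mapping.keys p" "m'' \<in> Poly_Mapping.keys p"
    and "\<forall>v\<in>vars p. Poly_Mapping.lookup m' v = Poly_Mapping.lookup m'' v" for m' m''
    using that by (intro poly_mapping_eqI) (metis UN_I in_keys_iff vars_def)
  show "Poly_Mapping.lookup p m = Poly_Mapping.lookup 0 m"
    using monomial_sum_vanishing_imp_coeffs_zero[OF finite_vars finite_keys distinct,
        where c = "Poly_Mapping.lookup p" and m = m] assms
    by (cases "m \<in> Poly_Mapping.keys p") (auto simp: peval_eq_sum_over_vars in_keys_iff)
qed

definition shift_mat :: "nat \<Rightarrow> nat \<Rightarrow> complex mat" where
  "shift_mat N K = mat N N (\<lambda>(i, j). if i = j + K then 1 else 0)"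

definition incl_mat :: "nat \<Rightarrow> nat \<Rightarrow> complex mat" where
  "incl_mat N K = mat N K (\<lambda>(i, j). if i = j then 1 else 0)"

lemma shift_mat_carrier [simp]:
  "shift_mat N K \<in> carrier_mat N N" "dim_row (shift_mat N K) = N" "dim_col (shift_mat N K) = N"
  by (simp_all add: shift_mat_def)

lemma incl_mat_carrier [simp]:
  "incl_mat N K \<in> carrier_mat N K" "dim_row (incl_mat N K) = N" "dim_col (incl_mat N K) = K"
  by (simp_all add: incl_mat_def)

lemma shift_mat_pow_index:
  assumes "i < N" "j < N"
  shows "(shift_mat N K ^\<^sub>m n) $$ (i, j) = (if i = j + n * K then 1 else 0)"
  using assms
proof (induction n arbitrary: j)
  case (Suc n)
  have "(shift_mat N K ^\<^sub>m Suc n) $$ (i, j)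
      = (\<Sum>l\<in>{0..<N}. (shift_mat N K ^\<^sub>m n) $$ (i, l) * shift_mat N K $$ (l, j))"
    using Suc.prems by (simp add: scalar_prod_def)
  also have "\<dots> = (\<Sum>l\<in>{0..<N}. if l = j + K then (if i = l + n * K then 1 else 0) else 0)"
    using Suc by (intro sum.cong refl) (simp add: shift_mat_def)
  also have "\<dots> = (if i = j + Suc n * K then 1 else 0)"
    using Suc.prems by (auto simp: sum.delta)
  finally show ?case .
qed simp

lemma mult_shift_mat_pow_index:
  assumes "C \<in> carrier_mat r N" "a < r" "i < N"
  shows "(C * shift_mat N K ^\<^sub>m n) $$ (a, i) = (if i + n * K < N then C $$ (a, i + n * K) else 0)"
proof -
  have "(C * shift_mat N K ^\<^sub>m n) $$ (a, i)
      = (\<Sum>l\<in>{0..<N}. C $$ (a, l) * (shift_mat N K ^\<^sub>m n) $$ (l, i))"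
    using assms by (simp add: scalar_prod_def)
  also have "\<dots> = (\<Sum>l\<in>{0..<N}. if l = i + n * K then C $$ (a, l) else 0)"
    using assms by (intro sum.cong refl) (simp add: shift_mat_pow_index)
  finally show ?thesis
    by (simp add: sum.delta)
qed

lemma mult_incl_mat_index:
  assumes "C \<in> carrier_mat r N" "a < r" "b < K" "K \<le> N"
  shows "(C * incl_mat N K) $$ (a, b) = C $$ (a, b)"
proof -
  have "(C * incl_mat N K) $$ (a, b) = (\<Sum>i\<in>{0..<N}. C $$ (a, i) * incl_mat N K $$ (i, b))"
    using assms by (simp add: scalar_prod_def)
  also have "\<dots> = (\<Sum>i\<in>{0..<N}. if i = b then C $$ (a, i) else 0)"
    using assms by (intro sum.cong refl) (simp add: incl_mat_def)
  finally show ?thesis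
    using assms by (simp add: sum.delta)
qed

lemma pi_coord_realizes:
  fixes x :: "loopvar \<Rightarrow> complex"
  obtains B N psi psibar
  where "B \<in> carrier_mat N N" "psi \<in> carrier_mat N K" "psibar \<in> carrier_mat K N"
    and "\<And>n a b. n \<le> M \<Longrightarrow> a < K \<Longrightarrow> b < K \<Longrightarrow> pi_coord B psi psibar (n, a, b) = x (n, a, b)"
proof
  define N where "N = (M + 1) * K"
  define psibar :: "complex mat"
    where "psibar = mat K N (\<lambda>(a, i). 2 ^ (i div K) * x (i div K, a, i mod K))"
  define psi where "psi = incl_mat N K"
  define B where "B = shift_mat N K - psi * psibar"
  show psibar: "psibar \<in> carrier_mat K N" and psi: "psi \<in> carrier_mat N K"
    by (simp_all add: psibar_def psi_def)
  then show B: "B \<in> carrier_mat N N"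
    by (simp add: B_def minus_carrier_mat)
  have Bt: "B + psi * psibar = shift_mat N K"
    using psi psibar by (intro eq_matI) (auto simp: B_def)
  fix n a b assume "n \<le> M" "a < K" "b < K"
  moreover have "b + n * K < N"
  proof -
    have "b + n * K < (n + 1) * K"
      using \<open>b < K\<close> by simp
    also have "\<dots> \<le> N"
      unfolding N_def using \<open>n \<le> M\<close> by (intro mult_right_mono) auto
    finally show ?thesis .
  qed
  ultimately have "(psibar * shift_mat N K ^\<^sub>m n * psi) $$ (a, b)
      = (psibar * shift_mat N K ^\<^sub>m n) $$ (a, b)"
    unfolding psi_def using psibar by (intro mult_incl_mat_index) (auto simp: N_def)
  also have "\<dots> = psibar $$ (a, b + n * K)"
    using mult_shift_mat_pow_index[OF psibar \<open>a < K\<close>, of b] \<open>b + n * K < N\<close> by simp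
  also have "\<dots> = 2 ^ n * x (n, a, b)"
    using \<open>a < K\<close> \<open>b < K\<close> \<open>b + n * K < N\<close> by (simp add: psibar_def)
  finally show "pi_coord B psi psibar (n, a, b) = x (n, a, b)"
    by (simp add: pi_coord_def Bt power_one_over)
qed

theorem mainTheorem4:
  fixes K :: nat and p :: loop_poly
  assumes "in_coord_ring K p"
    and "\<forall>N B psi psibar. B \<in> carrier_mat N N \<longrightarrow> psi \<in> carrier_mat N K \<longrightarrow>
           psibar \<in> carrier_mat K N \<longrightarrow> peval p (pi_coord B psi psibar) = 0"
  shows "p = 0"
proof (rule peval_vanishing_imp_zero)
  fix x
  define M where "M = Max (fst ` vars p)"
  have vars_bounded: "fst v \<le> M \<and> fst (snd v) < K \<and> snd (snd v) < K" if "v \<in> vars p" for v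
    using that assms(1) finite_vars by (auto simp: M_def in_coord_ring_def vars_def)
  obtain B N psi psibar
    where mats: "B \<in> carrier_mat N N" "psi \<in> carrier_mat N K" "psibar \<in> carrier_mat K N"
    and agree: "\<And>n a b. n \<le> M \<Longrightarrow> a < K \<Longrightarrow> b < K \<Longrightarrow> pi_coord B psi psibar (n, a, b) = x (n, a, b)"
    by (rule pi_coord_realizes[where K = K and M = M and x = x]) blast
  have "peval p x = peval p (pi_coord B psi psibar)"
    using vars_bounded agree by (intro peval_cong) (metis prod.collapse)
  also have "\<dots> = 0"
    using assms(2) mats by blast
  finally show "peval p x = 0" .
qed

end
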